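(* Let $h \geq 1$, $N \geq 1$, and let $d_1 \geq \dots \geq d_N$ and $d_1' \geq \dots \geq d_N'$ be integers in $[0,h]$. Then $P(d_1, \dots, d_N)(x) \geq P(d_1', \dots, d_N')(x)$ for all real $0 \leq x \leq h$ if and only if $d_1' + \dots + d_i' \leq d_1 + \dots + d_i$ for all $1 \leq i \leq N$.
   Context: For integers $d_1, \dots, d_N$ between $0$ and $h$, $P(d_1,\dots,d_N)$ is the function on $[0,h]$ given by $P(d_1, \dots, d_N)(x) = \frac{1}{N} \sum_{i=1}^N \max(0, x + d_i - h)$. *)

theory Defs
  imports Main Complex_Main
begin

definition P :: "int \<Rightarrow> nat \<Rightarrow> (nat \<Rightarrow> int) \<Rightarrow> real \<Rightarrow> real" where
  "P h N d x = (1 / real N) * (\<Sum>i=1..N. max 0 (x + real_of_int (d i) - real_of_int h))"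

end

theory Submission
  imports Defs
begin

text \<open>With the threshold \<open>y = h - x\<close>, \<open>N \<cdot> P(d)(x)\<close> is the hinge sum \<open>\<Sum>\<^sub>k max 0 (d\<^sub>k - y)\<close>.
  For a nonincreasing sequence the indices with \<open>d\<^sub>k \<ge> y\<close> form an initial segment \<open>1..m\<close>, and the
  hinge sum equals the prefix sum of \<open>d\<^sub>k - y\<close> over it; for any sequence every such prefix sum is a
  lower bound of the hinge sum. So dominated prefix sums give dominated hinge sums, and conversely
  comparing the hinge sums at the threshold \<open>y = d\<^sub>i\<close> gives the \<open>i\<close>-th prefix inequality.\<close>

lemma downward_closed_initial_segment:
  fixes Q :: "nat \<Rightarrow> bool"
  assumes "\<And>i j. 1 \<le> i \<Longrightarrow> i \<le> j \<Longrightarrow> j \<le> N \<Longrightarrow> Q j \<Longrightarrow> Q i"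
  shows "\<exists>m\<le>N. (\<forall>k. 1 \<le> k \<and> k \<le> m \<longrightarrow> Q k) \<and> (\<forall>k. m < k \<and> k \<le> N \<longrightarrow> \<not> Q k)"
  using assms
proof (induction N)
  case 0
  then show ?case by auto
next
  case (Suc N)
  show ?case
  proof (cases "Q (Suc N)")
    case True
    then show ?thesis using Suc.prems[of _ "Suc N"] by auto
  next
    case False
    obtain m where "m \<le> N" "\<forall>k. 1 \<le> k \<and> k \<le> m \<longrightarrow> Q k" "\<forall>k. m < k \<and> k \<le> N \<longrightarrow> \<not> Q k"
      using Suc by (metis le_SucI)
    with False show ?thesis by (metis le_Suc_eq le_SucI)
  qed
qed

lemma sum_prefix_le_sum_hinge:
  fixes b :: "nat \<Rightarrow> 'a::linordered_ab_group_add"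
  assumes "m \<le> N"
  shows "(\<Sum>k=1..m. b k - y) \<le> (\<Sum>k=1..N. max 0 (b k - y))"
proof -
  have "(\<Sum>k=1..m. b k - y) \<le> (\<Sum>k=1..m. max 0 (b k - y))"
    by (rule sum_mono) simp
  also have "\<dots> \<le> (\<Sum>k=1..N. max 0 (b k - y))"
    by (rule sum_mono2) (use assms in auto)
  finally show ?thesis .
qed

lemma sum_hinge_eq_sum_prefix:
  fixes b :: "nat \<Rightarrow> 'a::linordered_ab_group_add"
  assumes "m \<le> N"
    and "\<And>k. 1 \<le> k \<Longrightarrow> k \<le> m \<Longrightarrow> y \<le> b k"
    and "\<And>k. m < k \<Longrightarrow> k \<le> N \<Longrightarrow> b k \<le> y"
  shows "(\<Sum>k=1..N. max 0 (b k - y)) = (\<Sum>k=1..m. b k - y)"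
proof -
  have "(\<Sum>k=1..N. max 0 (b k - y)) = (\<Sum>k=1..m. max 0 (b k - y))"
    by (rule sum.mono_neutral_right) (use assms in auto)
  also have "\<dots> = (\<Sum>k=1..m. b k - y)"
    by (rule sum.cong) (use assms(2) in auto)
  finally show ?thesis .
qed

lemma sum_hinge_le_of_prefix_sums_le:
  fixes a b :: "nat \<Rightarrow> 'a::linordered_ab_group_add"
  assumes b_antimono: "\<And>i j. 1 \<le> i \<Longrightarrow> i \<le> j \<Longrightarrow> j \<le> N \<Longrightarrow> b j \<le> b i"
    and prefix_le: "\<And>i. 1 \<le> i \<Longrightarrow> i \<le> N \<Longrightarrow> (\<Sum>k=1..i. b k) \<le> (\<Sum>k=1..i. a k)"
  shows "(\<Sum>k=1..N. max 0 (b k - y)) \<le> (\<Sum>k=1..N. max 0 (a k - y))"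
proof -
  have "\<exists>m\<le>N. (\<forall>k. 1 \<le> k \<and> k \<le> m \<longrightarrow> y \<le> b k) \<and> (\<forall>k. m < k \<and> k \<le> N \<longrightarrow> \<not> y \<le> b k)"
    by (rule downward_closed_initial_segment) (use b_antimono in \<open>blast intro: order_trans\<close>)
  then obtain m where m: "m \<le> N" "\<And>k. 1 \<le> k \<Longrightarrow> k \<le> m \<Longrightarrow> y \<le> b k"
    "\<And>k. m < k \<Longrightarrow> k \<le> N \<Longrightarrow> \<not> y \<le> b k"
    by blast
  have "(\<Sum>k=1..N. max 0 (b k - y)) = (\<Sum>k=1..m. b k - y)"
    by (rule sum_hinge_eq_sum_prefix) (use m in \<open>auto simp: not_le intro: less_imp_le\<close>)
  also have "\<dots> \<le> (\<Sum>k=1..m. a k - y)"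
  proof (cases "m = 0")
    case False
    then show ?thesis using prefix_le[of m] m(1) by (simp add: sum_subtractf)
  qed simp
  also have "\<dots> \<le> (\<Sum>k=1..N. max 0 (a k - y))"
    using m(1) by (rule sum_prefix_le_sum_hinge)
  finally show ?thesis .
qed

lemma prefix_sum_le_of_sum_hinge_le:
  fixes a b :: "nat \<Rightarrow> 'a::linordered_ab_group_add"
  assumes a_antimono: "\<And>i j. 1 \<le> i \<Longrightarrow> i \<le> j \<Longrightarrow> j \<le> N \<Longrightarrow> a j \<le> a i"
    and i: "1 \<le> i" "i \<le> N"
    and hinge_le: "(\<Sum>k=1..N. max 0 (b k - a i)) \<le> (\<Sum>k=1..N. max 0 (a k - a i))"
  shows "(\<Sum>k=1..i. b k) \<le> (\<Sum>k=1..i. a k)"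
proof -
  have "(\<Sum>k=1..i. b k - a i) \<le> (\<Sum>k=1..N. max 0 (b k - a i))"
    using i(2) by (rule sum_prefix_le_sum_hinge)
  also note hinge_le
  also have "(\<Sum>k=1..N. max 0 (a k - a i)) = (\<Sum>k=1..i. a k - a i)"
    by (rule sum_hinge_eq_sum_prefix) (use a_antimono i in auto)
  finally show ?thesis by (simp add: sum_subtractf)
qed

lemma prefix_sums_le_iff_sum_hinge_le:
  fixes a b :: "nat \<Rightarrow> 'a::linordered_ab_group_add"
  assumes "\<And>i j. 1 \<le> i \<Longrightarrow> i \<le> j \<Longrightarrow> j \<le> N \<Longrightarrow> a j \<le> a i"
    and "\<And>i j. 1 \<le> i \<Longrightarrow> i \<le> j \<Longrightarrow> j \<le> N \<Longrightarrow> b j \<le> b i"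
    and "\<And>i. 1 \<le> i \<Longrightarrow> i \<le> N \<Longrightarrow> a i \<in> Y"
  shows "(\<forall>y\<in>Y. (\<Sum>k=1..N. max 0 (b k - y)) \<le> (\<Sum>k=1..N. max 0 (a k - y)))
     \<longleftrightarrow> (\<forall>i. 1 \<le> i \<and> i \<le> N \<longrightarrow> (\<Sum>k=1..i. b k) \<le> (\<Sum>k=1..i. a k))"
  using assms prefix_sum_le_of_sum_hinge_le[of N a] sum_hinge_le_of_prefix_sums_le[of N b a]
  by blast

theorem mainTheorem2:
  fixes h :: int and N :: nat and d d' :: "nat \<Rightarrow> int"
  assumes "h \<ge> 1" and "N \<ge> 1"
    and "\<And>i. 1 \<le> i \<Longrightarrow> i \<le> N \<Longrightarrow> 0 \<le> d i \<and> d i \<le> h"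
    and "\<And>i. 1 \<le> i \<Longrightarrow> i \<le> N \<Longrightarrow> 0 \<le> d' i \<and> d' i \<le> h"
    and "\<And>i j. 1 \<le> i \<Longrightarrow> i \<le> j \<Longrightarrow> j \<le> N \<Longrightarrow> d j \<le> d i"
    and "\<And>i j. 1 \<le> i \<Longrightarrow> i \<le> j \<Longrightarrow> j \<le> N \<Longrightarrow> d' j \<le> d' i"
  shows "(\<forall>x::real. 0 \<le> x \<and> x \<le> real_of_int h \<longrightarrow> P h N d x \<ge> P h N d' x)
     \<longleftrightarrow> (\<forall>i. 1 \<le> i \<and> i \<le> N \<longrightarrow> (\<Sum>k=1..i. d' k) \<le> (\<Sum>k=1..i. d k))"
proof -
  define hinge where "hinge e y = (\<Sum>k=1..N. max 0 (real_of_int (e k) - y))" for e y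
  have P_le_iff: "P h N d' x \<le> P h N d x \<longleftrightarrow> hinge d' (h - x) \<le> hinge d (h - x)" for x :: real
    unfolding P_def hinge_def using \<open>N \<ge> 1\<close> by (simp add: divide_le_cancel algebra_simps)
  have "(\<forall>x::real. 0 \<le> x \<and> x \<le> h \<longrightarrow> P h N d x \<ge> P h N d' x)
      \<longleftrightarrow> (\<forall>y\<in>{0..real_of_int h}. hinge d' y \<le> hinge d y)"
    unfolding P_le_iff
  proof (intro iffI ballI allI impI)
    fix y :: real
    assume all_x: "\<forall>x::real. 0 \<le> x \<and> x \<le> h \<longrightarrow> hinge d' (h - x) \<le> hinge d (h - x)"
      and y: "y \<in> {0..real_of_int h}"
    from y show "hinge d' y \<le> hinge d y" using all_x[rule_format, of "h - y"] by simp
  qed simp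
  also have "\<dots> \<longleftrightarrow> (\<forall>i. 1 \<le> i \<and> i \<le> N \<longrightarrow> (\<Sum>k=1..i. real_of_int (d' k)) \<le> (\<Sum>k=1..i. real_of_int (d k)))"
    unfolding hinge_def
    \<comment> \<open>only the thresholds \<open>d i\<close> must lie in \<open>[0, h]\<close>\<close>
    by (rule prefix_sums_le_iff_sum_hinge_le) (use assms(3,5,6) in auto)
  also have "\<dots> \<longleftrightarrow> (\<forall>i. 1 \<le> i \<and> i \<le> N \<longrightarrow> (\<Sum>k=1..i. d' k) \<le> (\<Sum>k=1..i. d k))"
    by (simp only: of_int_sum [symmetric] of_int_le_iff)
  finally show ?thesis .
qed

end
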